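(* Let $\mathfrak p,\mathfrak p'$ be U-matroid polyhedra. Then $\mathfrak p'$ is a sheared polyhedron of $\mathfrak p$ (i.e. $\mathfrak p'\subseteq\mathfrak p$ and every vertex of $\mathfrak p$ is a vertex of $\mathfrak p'$) if and only if $\mathfrak p$ is the Minkowski sum $\mathfrak p'+\mathrm{rec}(\mathfrak p)$, where $\mathrm{rec}(\mathfrak p)=\{\mathbf{y}:\mathbf{x}+\mathbf{y}\in\mathfrak p\ \forall\mathbf{x}\in\mathfrak p\}$ is the recession cone of $\mathfrak p$.
   Context: A U-matroid polyhedron is a polyhedron $\mathfrak p\subset\mathbb{R}^n$ with at least one vertex, all of whose vertices are 0,1-vectors, and each of whose 1-dimensional faces (bounded edges or rays) is parallel to a difference of two standard basis vectors; equivalently, the base polyhedron $\{\mathbf{x}:\mathbf{x}(A)\le\rho(A)\ \forall A\in\mathcal{D},\ \mathbf{x}(E)=\rho(E)\}$ of a U-matroid $(E,\mathcal{D},\rho)$. *)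

theory Defs
  imports "HOL-Analysis.Analysis"
begin

definition unit_vec :: "'n::finite \<Rightarrow> real^'n" where
  "unit_vec i = axis i 1"

definition parallel_to_root :: "(real^'n::finite) set \<Rightarrow> bool" where
  "parallel_to_root F \<longleftrightarrow>
     (\<exists>i j. i \<noteq> j \<and> (\<forall>x\<in>F. \<forall>y\<in>F. \<exists>t::real. y - x = t *\<^sub>R (unit_vec i - unit_vec j)))"

definition U_matroid_polyhedron :: "(real^'n::finite) set \<Rightarrow> bool" where
  "U_matroid_polyhedron P \<longleftrightarrow>
     polyhedron P \<and>
     (\<exists>v. v extreme_point_of P) \<and>
     (\<forall>v. v extreme_point_of P \<longrightarrow> (\<forall>i. v $ i = 0 \<or> v $ i = 1)) \<and>
     (\<forall>F. F face_of P \<and> aff_dim F = 1 \<longrightarrow> parallel_to_root F)"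

definition recession_cone :: "(real^'n::finite) set \<Rightarrow> (real^'n) set" where
  "recession_cone P = {y. \<forall>x\<in>P. x + y \<in> P}"

definition sheared_polyhedron_of :: "(real^'n::finite) set \<Rightarrow> (real^'n) set \<Rightarrow> bool" where
  "sheared_polyhedron_of P' P \<longleftrightarrow>
     P' \<subseteq> P \<and> (\<forall>v. v extreme_point_of P \<longrightarrow> v extreme_point_of P')"

end

theory Submission
  imports Defs
begin

text \<open>
  A polyhedron P with a vertex is the convex hull of its vertices plus its recession cone. Write
  P = {x. \<forall>i\<in>I. a i \<bullet> x \<le> b i}. A point of P that is not a vertex has a nonzero direction d
  keeping its active constraints active, and since P contains no line, moving along d or -d
  makes a new constraint active. If both moves are bounded, the point is a convex combination of
  two points with more active constraints; otherwise it is such a point plus a recession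
  direction. Induction on the number of inactive constraints concludes.

  Given this resolution, a subpolyhedron containing all vertices of P gives back P after adding
  the recession cone. Conversely, if P = P' + rec P, a vertex x + y with x \<in> P' and y \<in> rec P is
  the midpoint of x and x + 2y, both in P, so y = 0 and the vertex lies in P'.
\<close>

definition active_constraints :: "'i set \<Rightarrow> ('i \<Rightarrow> 'a::real_inner) \<Rightarrow> ('i \<Rightarrow> real) \<Rightarrow> 'a \<Rightarrow> 'i set"
  where "active_constraints I a b x = {i\<in>I. a i \<bullet> x = b i}"

lemma polyhedron_obtain_constraints:
  fixes P :: "'a::euclidean_space set"
  assumes "polyhedron P"
  obtains I :: "'a set set" and a b where "finite I" "P = {x. \<forall>i\<in>I. a i \<bullet> x \<le> b i}"
proof -
  obtain F where "finite F" and P: "P = \<Inter>F"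
    and halfspaces: "\<forall>h\<in>F. \<exists>a b. a \<noteq> 0 \<and> h = {x. a \<bullet> x \<le> b}"
    using assms unfolding polyhedron_def by blast
  obtain a where a: "\<forall>h\<in>F. \<exists>b. a h \<noteq> 0 \<and> h = {x. a h \<bullet> x \<le> b}"
    using bchoice[OF halfspaces] by blast
  obtain b where "\<forall>h\<in>F. a h \<noteq> 0 \<and> h = {x. a h \<bullet> x \<le> b h}"
    using bchoice[OF a] by blast
  then have "P = {x. \<forall>h\<in>F. a h \<bullet> x \<le> b h}"
    unfolding P by auto
  with \<open>finite F\<close> show thesis
    by (rule that)
qed

lemma move_until_new_active_constraint:
  fixes a :: "'i \<Rightarrow> 'a::real_inner"
  assumes "finite I" and feasible: "\<forall>i\<in>I. a i \<bullet> x \<le> b i"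
    and tangent: "\<forall>i\<in>active_constraints I a b x. a i \<bullet> d = 0"
    and increasing: "\<exists>i\<in>I. a i \<bullet> d > 0"
  obtains t where "t > 0" "\<forall>i\<in>I. a i \<bullet> (x + t *\<^sub>R d) \<le> b i"
    "active_constraints I a b x \<subset> active_constraints I a b (x + t *\<^sub>R d)"
proof -
  define J where "J = {i\<in>I. a i \<bullet> d > 0}"
  define hit_time where "hit_time i = (b i - a i \<bullet> x) / (a i \<bullet> d)" for i
  define t where "t = Min (hit_time ` J)"
  have fin: "finite (hit_time ` J)" and nonempty: "hit_time ` J \<noteq> {}"
    using \<open>finite I\<close> increasing by (auto simp: J_def)
  obtain j where j: "j \<in> J" "hit_time j = t"
    using Min_in[OF fin nonempty] unfolding t_def by (metis imageE)
  have t_le: "t \<le> hit_time i" if "i \<in> J" for i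
    using Min_le[OF fin] that unfolding t_def by blast
  have inactive: "a i \<bullet> x < b i" if "i \<in> J" for i
    using that feasible tangent by (force simp: J_def active_constraints_def)
  have "t > 0"
    using inactive[OF j(1)] j(1) unfolding j(2)[symmetric] by (simp add: J_def hit_time_def)
  have "a i \<bullet> (x + t *\<^sub>R d) \<le> b i" if "i \<in> I" for i
  proof (cases "i \<in> J")
    case True
    then have "t * (a i \<bullet> d) \<le> hit_time i * (a i \<bullet> d)"
      using t_le by (simp add: J_def mult_right_mono)
    also have "\<dots> = b i - a i \<bullet> x"
      using True by (simp add: J_def hit_time_def)
    finally show ?thesis
      by (simp add: inner_add_right)
  next
    case False
    then have "t * (a i \<bullet> d) \<le> 0"
      using \<open>t > 0\<close> that by (simp add: J_def mult_nonneg_nonpos)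
    moreover have "a i \<bullet> x \<le> b i"
      using feasible that by blast
    ultimately show ?thesis
      by (simp add: inner_add_right)
  qed
  moreover have "active_constraints I a b x \<subseteq> active_constraints I a b (x + t *\<^sub>R d)"
    using tangent by (auto simp: active_constraints_def inner_add_right)
  moreover have "j \<in> active_constraints I a b (x + t *\<^sub>R d) - active_constraints I a b x"
    using j inactive[OF j(1)] by (auto simp: J_def hit_time_def active_constraints_def inner_add_right)
  ultimately show thesis
    using that \<open>t > 0\<close> by blast
qed

lemma tight_at_interior_of_segment:
  fixes u w c :: real
  assumes "u \<le> c" "w \<le> c" "(1 - s) * u + s * w = c" "0 < s" "s < 1"
  shows "u = c \<and> w = c"
proof -
  have "(1 - s) * (c - u) + s * (c - w) = 0"
    using assms(3) by (simp add: algebra_simps)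
  moreover have "(1 - s) * (c - u) \<ge> 0" "s * (c - w) \<ge> 0"
    using assms by simp_all
  ultimately show ?thesis
    using assms(4,5) by (simp add: add_nonneg_eq_0_iff)
qed

lemma extreme_point_if_no_active_direction:
  fixes a :: "'i \<Rightarrow> 'a::real_inner"
  assumes P: "P = {x. \<forall>i\<in>I. a i \<bullet> x \<le> b i}" and "x \<in> P"
    and no_direction: "\<And>d. \<forall>i\<in>active_constraints I a b x. a i \<bullet> d = 0 \<Longrightarrow> d = 0"
  shows "x extreme_point_of P"
  unfolding extreme_point_of_def
proof (intro conjI ballI notI)
  fix u w assume "u \<in> P" "w \<in> P" "x \<in> open_segment u w"
  then obtain s where "u \<noteq> w" "0 < s" "s < 1" and x: "x = (1 - s) *\<^sub>R u + s *\<^sub>R w"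
    by (auto simp: in_segment)
  have "a i \<bullet> (w - u) = 0" if "i \<in> active_constraints I a b x" for i
  proof -
    have "a i \<bullet> u \<le> b i" "a i \<bullet> w \<le> b i" "(1 - s) * (a i \<bullet> u) + s * (a i \<bullet> w) = b i"
      using that \<open>u \<in> P\<close> \<open>w \<in> P\<close> x P by (auto simp: active_constraints_def inner_add_right)
    then have "a i \<bullet> u = b i \<and> a i \<bullet> w = b i"
      using \<open>0 < s\<close> \<open>s < 1\<close> by (intro tight_at_interior_of_segment)
    then show ?thesis
      by (simp add: inner_diff_right)
  qed
  then show False
    using no_direction \<open>u \<noteq> w\<close> by force
qed (use \<open>x \<in> P\<close> in simp)

lemma extreme_point_imp_no_lineality:
  fixes a :: "'i \<Rightarrow> 'a::real_inner"
  assumes P: "P = {x. \<forall>i\<in>I. a i \<bullet> x \<le> b i}" and v: "v extreme_point_of P"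
    and "\<forall>i\<in>I. a i \<bullet> d = 0"
  shows "d = 0"
proof -
  have "v \<in> P"
    using v by (simp add: extreme_point_of_def)
  then have "v - d \<in> P" "v + d \<in> P"
    using assms by (auto simp: inner_diff_right inner_add_right)
  moreover have "midpoint (v - d) (v + d) = v"
    by (simp add: midpoint_def scaleR_add_right[symmetric])
  ultimately have "v - d = v + d"
    using v midpoint_in_open_segment by (metis extreme_point_of_def)
  then have "(2::real) *\<^sub>R d = 0"
    by (simp add: scaleR_2 algebra_simps)
  then show ?thesis
    by simp
qed

lemma convex_sums_set:
  fixes H K :: "'a::real_vector set"
  assumes "convex H" "convex K"
  shows "convex {c + y | c y. c \<in> H \<and> y \<in> K}"
proof -
  have "{c + y | c y. c \<in> H \<and> y \<in> K} = (\<Union>c\<in>H. \<Union>y\<in>K. {c + y})"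
    by blast
  then show ?thesis
    using convex_sums[OF assms] by simp
qed

lemma nonvertex_obtain_increasing_tangent_direction:
  fixes a :: "'i \<Rightarrow> 'a::real_inner"
  assumes P: "P = {x. \<forall>i\<in>I. a i \<bullet> x \<le> b i}" and v: "v extreme_point_of P"
    and "x \<in> P" "\<not> x extreme_point_of P"
  obtains d where "\<forall>i\<in>active_constraints I a b x. a i \<bullet> d = 0" "\<exists>i\<in>I. a i \<bullet> d > 0"
proof -
  obtain d where "d \<noteq> 0" and tangent: "\<forall>i\<in>active_constraints I a b x. a i \<bullet> d = 0"
    using extreme_point_if_no_active_direction[OF P \<open>x \<in> P\<close>] \<open>\<not> x extreme_point_of P\<close> by blast
  then obtain i where "i \<in> I" "a i \<bullet> d \<noteq> 0"
    using extreme_point_imp_no_lineality[OF P v] by blast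
  show thesis
  proof (cases "a i \<bullet> d > 0")
    case True
    then show thesis
      using that tangent \<open>i \<in> I\<close> by blast
  next
    case False
    then have "a i \<bullet> (- d) > 0"
      using \<open>a i \<bullet> d \<noteq> 0\<close> by simp
    then show thesis
      using that[of "- d"] tangent \<open>i \<in> I\<close> by auto
  qed
qed

lemma card_inactive_constraints_less:
  assumes "finite I" "active_constraints I a b x \<subset> active_constraints I a b z"
  shows "card I - card (active_constraints I a b z) < card I - card (active_constraints I a b x)"
proof -
  have "card (active_constraints I a b x) < card (active_constraints I a b z)"
    "card (active_constraints I a b z) \<le> card I"
    using assms by (auto intro!: psubset_card_mono card_mono finite_subset[of _ I]
        simp: active_constraints_def)
  then show ?thesis
    by linarith
qed

lemma mem_closed_segment_opposite_moves:
  fixes x d :: "'a::real_vector"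
  assumes "s > 0" "t > 0"
  shows "x \<in> closed_segment (x + s *\<^sub>R (- d)) (x + t *\<^sub>R d)"
proof -
  define l where "l = s / (s + t)"
  have "0 \<le> l" "l \<le> 1" "l * t - (1 - l) * s = 0"
    using assms by (simp_all add: l_def field_simps)
  moreover have "(1 - l) *\<^sub>R (x + s *\<^sub>R (- d)) + l *\<^sub>R (x + t *\<^sub>R d)
      = x + (l * t - (1 - l) * s) *\<^sub>R d"
    by (simp add: algebra_simps)
  ultimately show ?thesis
    unfolding in_segment by (intro disjI2 exI[of _ l]) simp
qed

lemma mem_hull_extreme_points_plus_constraint_cone:
  fixes a :: "'i \<Rightarrow> 'a::real_inner"
  assumes "finite I" and P: "P = {x. \<forall>i\<in>I. a i \<bullet> x \<le> b i}" and v: "v extreme_point_of P"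
    and "x \<in> P"
  shows "x \<in> {c + y | c y. c \<in> convex hull {v. v extreme_point_of P} \<and> (\<forall>i\<in>I. a i \<bullet> y \<le> 0)}"
    (is "x \<in> ?D")
  using \<open>x \<in> P\<close>
proof (induction x rule: measure_induct_rule[where f="\<lambda>x. card I - card (active_constraints I a b x)"])
  case (less x)
  have cone_convex: "convex {y. \<forall>i\<in>I. a i \<bullet> y \<le> 0}"
    by (simp add: convex_def inner_add_right add_nonpos_nonpos mult_nonneg_nonpos)
  have "convex ?D"
    using convex_sums_set[OF convex_convex_hull cone_convex] by (simp only: mem_Collect_eq)
  have D_plus_cone: "z + y \<in> ?D" if "z \<in> ?D" "\<forall>i\<in>I. a i \<bullet> y \<le> 0" for z y
  proof -
    obtain c y' where "z = c + y'" "c \<in> convex hull {v. v extreme_point_of P}" "\<forall>i\<in>I. a i \<bullet> y' \<le> 0"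
      using \<open>z \<in> ?D\<close> by blast
    then show ?thesis
      using that(2) by (intro CollectI exI[of _ c] exI[of _ "y' + y"])
        (auto simp: inner_add_right add_nonpos_nonpos add.assoc)
  qed
  have IH: "z \<in> ?D" if "z \<in> P" "active_constraints I a b x \<subset> active_constraints I a b z" for z
    using less.IH that(1) card_inactive_constraints_less[OF \<open>finite I\<close> that(2)] by simp
  show ?case
  proof (cases "x extreme_point_of P")
    case True
    then show ?thesis
      by (intro CollectI exI[of _ x] exI[of _ 0]) (auto simp: hull_inc)
  next
    case False
    then obtain d where tangent: "\<forall>i\<in>active_constraints I a b x. a i \<bullet> d = 0"
      and increasing: "\<exists>i\<in>I. a i \<bullet> d > 0"
      using nonvertex_obtain_increasing_tangent_direction[OF P v less.prems] by blast
    have feasible: "\<forall>i\<in>I. a i \<bullet> x \<le> b i"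
      using less.prems P by simp
    obtain t where t: "t > 0" "x + t *\<^sub>R d \<in> P"
      "active_constraints I a b x \<subset> active_constraints I a b (x + t *\<^sub>R d)"
      using move_until_new_active_constraint[OF \<open>finite I\<close> feasible tangent increasing] P by auto
    have forward: "x + t *\<^sub>R d \<in> ?D"
      using IH[OF t(2,3)] .
    show ?thesis
    proof (cases "\<exists>i\<in>I. a i \<bullet> (- d) > 0")
      case True
      obtain s where s: "s > 0" "x + s *\<^sub>R (- d) \<in> P"
        "active_constraints I a b x \<subset> active_constraints I a b (x + s *\<^sub>R (- d))"
        using move_until_new_active_constraint[OF \<open>finite I\<close> feasible _ True] tangent P by auto
      have backward: "x + s *\<^sub>R (- d) \<in> ?D"
        using IH[OF s(2,3)] .
      show ?thesis
        using mem_closed_segment_opposite_moves[OF \<open>s > 0\<close> \<open>t > 0\<close>]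
        by (rule subsetD[OF closed_segment_subset[OF backward forward \<open>convex ?D\<close>]])
    next
      case False
      then have "\<forall>i\<in>I. a i \<bullet> (- t *\<^sub>R d) \<le> 0"
        using t(1) by (auto simp: not_less mult_nonneg_nonneg)
      from D_plus_cone[OF forward this] show ?thesis
        by simp
    qed
  qed
qed

lemma constraint_cone_subset_recession_cone:
  fixes a :: "'i \<Rightarrow> real^'n::finite"
  assumes "P = {x. \<forall>i\<in>I. a i \<bullet> x \<le> b i}" "\<forall>i\<in>I. a i \<bullet> y \<le> 0"
  shows "y \<in> recession_cone P"
  unfolding recession_cone_def
proof (intro CollectI ballI)
  fix x assume "x \<in> P"
  have "a i \<bullet> (x + y) \<le> b i" if "i \<in> I" for i
  proof -
    have "a i \<bullet> x \<le> b i" "a i \<bullet> y \<le> 0"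
      using assms that \<open>x \<in> P\<close> by auto
    then show ?thesis
      by (simp add: inner_add_right)
  qed
  then show "x + y \<in> P"
    using assms(1) by simp
qed

theorem pointed_polyhedron_eq_hull_plus_recession_cone:
  fixes P :: "(real^'n::finite) set"
  assumes "polyhedron P" and v: "v extreme_point_of P"
  shows "P = {c + y | c y. c \<in> convex hull {v. v extreme_point_of P} \<and> y \<in> recession_cone P}"
proof (intro subset_antisym subsetI)
  fix x assume "x \<in> P"
  obtain I :: "(real^'n) set set" and a b where "finite I" and P: "P = {x. \<forall>i\<in>I. a i \<bullet> x \<le> b i}"
    using polyhedron_obtain_constraints[OF \<open>polyhedron P\<close>] by blast
  show "x \<in> {c + y | c y. c \<in> convex hull {v. v extreme_point_of P} \<and> y \<in> recession_cone P}"
    using mem_hull_extreme_points_plus_constraint_cone[OF \<open>finite I\<close> P v \<open>x \<in> P\<close>]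
      constraint_cone_subset_recession_cone[OF P] by blast
next
  fix x assume "x \<in> {c + y | c y. c \<in> convex hull {v. v extreme_point_of P} \<and> y \<in> recession_cone P}"
  moreover have "convex hull {v. v extreme_point_of P} \<subseteq> P"
    using polyhedron_imp_convex[OF \<open>polyhedron P\<close>]
    by (intro hull_minimal) (auto simp: extreme_point_of_def)
  ultimately show "x \<in> P"
    by (auto simp: recession_cone_def)
qed

lemma extreme_point_of_subset:
  "v extreme_point_of S \<Longrightarrow> v \<in> T \<Longrightarrow> T \<subseteq> S \<Longrightarrow> v extreme_point_of T"
  by (auto simp: extreme_point_of_def)

lemma extreme_point_plus_recession_imp_zero:
  fixes P :: "(real^'n::finite) set"
  assumes v: "v extreme_point_of P" and "x \<in> P" "y \<in> recession_cone P" "v = x + y"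
  shows "y = 0"
proof (rule ccontr)
  assume "y \<noteq> 0"
  have "x + y + y \<in> P"
    using assms unfolding recession_cone_def by blast
  moreover have "x + (x + y + y) = (2::real) *\<^sub>R v"
    using \<open>v = x + y\<close> by (simp add: scaleR_2 algebra_simps)
  then have "midpoint x (x + y + y) = v"
    by (simp add: midpoint_def)
  moreover have "x \<noteq> x + y + y"
    using \<open>y \<noteq> 0\<close> by (simp add: add.assoc flip: scaleR_2)
  ultimately show False
    using v \<open>x \<in> P\<close> midpoint_in_open_segment by (metis extreme_point_of_def)
qed

lemma sheared_imp_eq_plus_recession_cone:
  fixes P P' :: "(real^'n::finite) set"
  assumes "polyhedron P" "v extreme_point_of P" "convex P'" "sheared_polyhedron_of P' P"
  shows "P = {x + y | x y. x \<in> P' \<and> y \<in> recession_cone P}"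
proof -
  have "P' \<subseteq> P" and "{v. v extreme_point_of P} \<subseteq> P'"
    using assms(4) unfolding sheared_polyhedron_of_def by (auto simp: extreme_point_of_def)
  then have "convex hull {v. v extreme_point_of P} \<subseteq> P'"
    using \<open>convex P'\<close> by (simp add: hull_minimal)
  then have "P \<subseteq> {x + y | x y. x \<in> P' \<and> y \<in> recession_cone P}"
    by (subst (1) pointed_polyhedron_eq_hull_plus_recession_cone[OF assms(1,2)]) blast
  moreover have "{x + y | x y. x \<in> P' \<and> y \<in> recession_cone P} \<subseteq> P"
    using \<open>P' \<subseteq> P\<close> by (auto simp: recession_cone_def)
  ultimately show ?thesis
    by (rule subset_antisym)
qed

lemma eq_plus_recession_cone_imp_sheared:
  fixes P P' :: "(real^'n::finite) set"
  assumes sum: "P = {x + y | x y. x \<in> P' \<and> y \<in> recession_cone P}"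
  shows "sheared_polyhedron_of P' P"
proof -
  have "P' \<subseteq> P"
  proof
    fix x assume "x \<in> P'"
    have "0 \<in> recession_cone P"
      by (simp add: recession_cone_def)
    with \<open>x \<in> P'\<close> have "x + 0 \<in> P"
      by (subst sum) blast
    then show "x \<in> P"
      by simp
  qed
  moreover have "v extreme_point_of P'" if v: "v extreme_point_of P" for v
  proof -
    have "v \<in> P"
      using v by (simp add: extreme_point_of_def)
    then obtain x y where "v = x + y" "x \<in> P'" "y \<in> recession_cone P"
      by (subst (asm) sum) blast
    moreover have "y = 0"
      using extreme_point_plus_recession_imp_zero[OF v] \<open>P' \<subseteq> P\<close> calculation by blast
    ultimately show ?thesis
      using extreme_point_of_subset[OF v _ \<open>P' \<subseteq> P\<close>] by simp
  qed
  ultimately show ?thesis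
    by (simp add: sheared_polyhedron_of_def)
qed

theorem proposition4p6:
  fixes P P' :: "(real^'n::finite) set"
  assumes "U_matroid_polyhedron P" and "U_matroid_polyhedron P'"
  shows "sheared_polyhedron_of P' P \<longleftrightarrow>
         P = {x + y | x y. x \<in> P' \<and> y \<in> recession_cone P}"
proof -
  obtain v where "polyhedron P" "v extreme_point_of P" "polyhedron P'"
    using assms unfolding U_matroid_polyhedron_def by blast
  with sheared_imp_eq_plus_recession_cone polyhedron_imp_convex
  have "sheared_polyhedron_of P' P \<Longrightarrow> P = {x + y | x y. x \<in> P' \<and> y \<in> recession_cone P}"
    by blast
  with eq_plus_recession_cone_imp_sheared show ?thesis
    by (rule iffI[rotated])
qed

end
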